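(* Let $q<0$ with $\mathbb P(\omega_1<q)>0$, let $A\in2\mathbb N$ and $\varepsilon>0$. For $M\in2\mathbb N$ define $$\tau_{M,q}(\omega):=\inf\Big\{n\in2\mathbb N:\ \exists k\in2\mathbb N,\ k\ge M,\ \frac1k\sum_{i=n-k+1}^n\omega_i\le q\Big\},$$ $$\ell(\omega)=\ell_{A,\varepsilon,q}(\omega):=\inf\Big\{k\in2\mathbb N,\ k\ge A:\ \frac{\log\tau_{k,q}(\omega)}{k}\le\Sigma(q)+\varepsilon\Big\},$$ and $T(\omega)=T_{A,\varepsilon,q}(\omega):=\tau_{\ell(\omega),q}(\omega)$. Then $\mathbb E[T_{A,\varepsilon,q}]<\infty$.
   Context: $\omega=(\omega_n)_{n\ge1}$ is a sequence of i.i.d. real random variables with law $\mathbb P$ (expectation $\mathbb E$) such that $\mathsf M(\alpha):=\mathbb E[e^{\alpha\omega_1}]<\infty$ for all $\alpha\in\mathbb R$, $\mathbb E[\omega_1]=0$, $\mathbb E[\omega_1^2]=1$. $\Sigma(q):=\sup_{\alpha\in\mathbb R}\{\alpha q-\log\mathsf M(\alpha)\}$ is the Cramér rate function. In the sums defining $\tau_{M,q}$, indices $i\le0$ are not allowed (i.e. one requires $n-k\ge0$). *)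

theory Defs
  imports "HOL-Probability.Probability"
begin

text \<open>Throughout, 2N denotes the positive even integers {2,4,6,...}.
  A realisation of the sequence is a function w :: nat => real; only indices i >= 1 are used.\<close>

definition cramer_rate :: "'a measure \<Rightarrow> ('a \<Rightarrow> real) \<Rightarrow> real \<Rightarrow> ereal" where
  "cramer_rate M Y q = (SUP \<alpha>::real. ereal (\<alpha> * q - ln (\<integral>x. exp (\<alpha> * Y x) \<partial>M)))"

definition tau :: "(nat \<Rightarrow> real) \<Rightarrow> nat \<Rightarrow> real \<Rightarrow> enat" where
  "tau w Mk q = Inf {enat n | n. even n \<and> n > 0 \<and>
     (\<exists>k. even k \<and> k > 0 \<and> k \<ge> Mk \<and> k \<le> n \<and>
          (1 / real k) * (\<Sum>i\<in>{n - k + 1..n}. w i) \<le> q)}"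

definition ell :: "(nat \<Rightarrow> real) \<Rightarrow> ereal \<Rightarrow> nat \<Rightarrow> real \<Rightarrow> real \<Rightarrow> enat" where
  "ell w Sig A eps q = Inf {enat k | k. even k \<and> k > 0 \<and> k \<ge> A \<and>
     (\<exists>t. tau w k q = enat t \<and> ereal (ln (real t) / real k) \<le> Sig + ereal eps)}"

definition T_time :: "(nat \<Rightarrow> real) \<Rightarrow> ereal \<Rightarrow> nat \<Rightarrow> real \<Rightarrow> real \<Rightarrow> enat" where
  "T_time w Sig A eps q = (case ell w Sig A eps q of enat k \<Rightarrow> tau w k q | \<infinity> \<Rightarrow> \<infinity>)"

end

theory Submission
  imports Defs "HOL-Real_Asymp.Real_Asymp"
begin

text \<open>
  Let \<open>f a = E exp (a (X\<^sub>1 - q))\<close>; then \<open>\<Sigma>(q) = - ln (min f)\<close>. Cut the sequence into consecutive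
  blocks of even length \<open>k\<close>. If one of the first \<open>exp (k (\<Sigma>(q) + \<epsilon>)) / k\<close> blocks has average at most
  \<open>q\<close>, then \<open>\<tau>\<^sub>k\<close> is at most the end of that block, so \<open>\<ell> \<le> k\<close> and \<open>T \<le> exp (k (\<Sigma>(q) + \<epsilon>))\<close>.
  A block has average at most \<open>q\<close> with probability at least \<open>exp (- k (\<Sigma>(q) + \<epsilon>/2)) / 2\<close>, by a
  Chernoff-type lower bound that uses only exponential moments. The blocks are independent, so
  the probability that none of them succeeds is at most \<open>exp (1/2 - exp (k \<epsilon>/2) / (2 k))\<close>, and this
  doubly exponential decay beats the factor \<open>exp ((k + 2) (\<Sigma>(q) + \<epsilon>))\<close> in the resulting bound
  for \<open>E T\<close>.
\<close>

section \<open>Elementary inequalities for the exponential\<close>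

lemma abs_exp_sub_exp_minus_le: "\<bar>exp v - exp (- v)\<bar> \<le> 2 * \<bar>v\<bar> * exp \<bar>v\<bar>" for v :: real
proof -
  have nonneg: "exp w - exp (- w) \<le> 2 * w * exp w" if "w \<ge> 0" for w :: real
  proof -
    have "1 - exp (- (2 * w)) \<le> 2 * w"
      using exp_ge_add_one_self[of "- (2 * w)"] by simp
    then have "exp w * (1 - exp (- (2 * w))) \<le> exp w * (2 * w)"
      by (intro mult_left_mono) auto
    moreover have "exp w * exp (- (2 * w)) = exp (- w)"
      by (simp add: exp_add[symmetric])
    ultimately show ?thesis by (simp add: algebra_simps)
  qed
  show ?thesis
    using nonneg[of v] nonneg[of "- v"] by (cases "v \<ge> 0") auto
qed

lemma exp_add_exp_minus_sub_two_le: "exp u + exp (- u) - 2 \<le> u\<^sup>2 * exp \<bar>u\<bar>" for u :: real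
proof -
  have "exp u + exp (- u) - 2 = \<bar>exp (u / 2) - exp (- (u / 2))\<bar>\<^sup>2"
    by (simp add: power2_eq_square algebra_simps exp_add[symmetric])
  also have "\<dots> \<le> (2 * \<bar>u / 2\<bar> * exp \<bar>u / 2\<bar>)\<^sup>2"
    by (intro power_mono abs_exp_sub_exp_minus_le) auto
  also have "\<dots> = u\<^sup>2 * (exp (\<bar>u\<bar> / 2))\<^sup>2"
    by (simp add: power_mult_distrib)
  also have "(exp (\<bar>u\<bar> / 2))\<^sup>2 = exp \<bar>u\<bar>"
    by (simp add: power2_eq_square exp_add[symmetric])
  finally show ?thesis .
qed

lemma power2_le_four_exp_abs: "y\<^sup>2 \<le> 4 * exp \<bar>y\<bar>" for y :: real
proof -
  have "\<bar>y\<bar> / 2 \<le> exp (\<bar>y\<bar> / 2)"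
    using exp_ge_add_one_self[of "\<bar>y\<bar> / 2"] by linarith
  then have "(\<bar>y\<bar> / 2)\<^sup>2 \<le> (exp (\<bar>y\<bar> / 2))\<^sup>2"
    by (intro power_mono) auto
  then show ?thesis
    by (simp add: power2_eq_square exp_add[symmetric])
qed

lemma exp_abs_le_exp_add_exp_minus: "exp \<bar>x\<bar> \<le> exp x + exp (- x)" for x :: real
  by (cases "x \<ge> 0") (simp_all add: add_increasing add_increasing2 less_imp_le)

lemma exp_second_difference_le:
  fixes a h y R :: real
  assumes "\<bar>a\<bar> \<le> R" "\<bar>h\<bar> \<le> 1"
  shows "exp ((a + h) * y) + exp ((a - h) * y) - 2 * exp (a * y)
           \<le> 4 * h\<^sup>2 * (exp ((R + 2) * y) + exp (- (R + 2) * y))"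
proof -
  have "a * y + \<bar>h * y\<bar> \<le> (R + 1) * \<bar>y\<bar>"
  proof -
    have "a * y \<le> R * \<bar>y\<bar>"
      using assms(1) by (metis abs_ge_self abs_mult mult_right_mono abs_ge_zero order_trans)
    moreover have "\<bar>h * y\<bar> \<le> \<bar>y\<bar>"
      using assms(2) by (simp add: abs_mult mult_left_le_one_le)
    ultimately show ?thesis by (simp add: algebra_simps)
  qed
  have "exp ((a + h) * y) + exp ((a - h) * y) - 2 * exp (a * y)
          = exp (a * y) * (exp (h * y) + exp (- (h * y)) - 2)"
    by (simp add: algebra_simps exp_add[symmetric])
  also have "\<dots> \<le> exp (a * y) * ((h * y)\<^sup>2 * exp \<bar>h * y\<bar>)"
    by (intro mult_left_mono exp_add_exp_minus_sub_two_le) auto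
  also have "\<dots> = h\<^sup>2 * (y\<^sup>2 * exp (a * y + \<bar>h * y\<bar>))"
    by (simp add: power_mult_distrib exp_add algebra_simps)
  also have "\<dots> \<le> h\<^sup>2 * (4 * exp \<bar>y\<bar> * exp ((R + 1) * \<bar>y\<bar>))"
    using \<open>a * y + \<bar>h * y\<bar> \<le> (R + 1) * \<bar>y\<bar>\<close>
    by (intro mult_left_mono mult_mono power2_le_four_exp_abs) auto
  also have "\<dots> = 4 * h\<^sup>2 * exp ((R + 2) * \<bar>y\<bar>)"
    by (simp add: exp_add[symmetric] algebra_simps)
  also have "\<dots> \<le> 4 * h\<^sup>2 * (exp ((R + 2) * y) + exp (- (R + 2) * y))"
  proof (rule mult_left_mono)
    have "(R + 2) * \<bar>y\<bar> = \<bar>(R + 2) * y\<bar>"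
      using assms(1) by (simp add: abs_mult)
    then show "exp ((R + 2) * \<bar>y\<bar>) \<le> exp ((R + 2) * y) + exp (- (R + 2) * y)"
      using exp_abs_le_exp_add_exp_minus[of "(R + 2) * y"] by (simp only: minus_mult_left)
  qed simp
  finally show ?thesis .
qed

lemma exp_le_three_regimes:
  fixes \<alpha> h t z :: real
  assumes "\<alpha> \<le> 0" "h > 0"
  shows "exp (\<alpha> * z) \<le> exp (- \<alpha> * t) * of_bool (z \<le> 0) + exp ((\<alpha> + h) * z)
                         + exp ((\<alpha> - h) * z) * exp (- h * t)"
proof -
  have nonneg: "0 \<le> exp (- \<alpha> * t) * of_bool (z \<le> 0)" "0 \<le> exp ((\<alpha> + h) * z)"
    "0 \<le> exp ((\<alpha> - h) * z) * exp (- h * t)"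
    by simp_all
  consider "z > 0" | "z < - t" | "- t \<le> z" "z \<le> 0" by linarith
  then show ?thesis
  proof cases
    case 1
    then have "\<alpha> * z \<le> (\<alpha> + h) * z"
      using assms by (intro mult_right_mono) auto
    then show ?thesis using nonneg by (smt (verit) exp_le_cancel_iff)
  next
    case 2
    then have "\<alpha> * z \<le> (\<alpha> - h) * z + - h * t"
      using assms mult_strict_left_mono[of z "- t" h] by (simp add: algebra_simps)
    then have "exp (\<alpha> * z) \<le> exp ((\<alpha> - h) * z) * exp (- h * t)"
      by (simp add: exp_add[symmetric])
    then show ?thesis using nonneg by linarith
  next
    case 3
    then have "exp (\<alpha> * z) \<le> exp (- \<alpha> * t) * of_bool (z \<le> 0)"
      using assms mult_left_mono_neg[of "- t" z \<alpha>] by simp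
    then show ?thesis using nonneg by linarith
  qed
qed

section \<open>Blocks and the stopping times\<close>

definition block :: "nat \<Rightarrow> nat \<Rightarrow> nat set" where
  "block k j = {(j - 1) * k + 1 .. j * k}"

lemma block_subset: "block k j \<subseteq> {1..}"
  by (auto simp: block_def)

lemma finite_block [simp]: "finite (block k j)"
  by (simp add: block_def)

lemma card_block: "j \<ge> 1 \<Longrightarrow> card (block k j) = k"
  by (cases j) (auto simp: block_def)

lemma window_eq_block: "j \<ge> 1 \<Longrightarrow> {j * k - k + 1 .. j * k} = block k j"
  by (simp add: block_def diff_mult_distrib)

lemma disjoint_family_block: "disjoint_family_on (block k) J"
proof -
  have "block k a \<inter> block k b = {}" if "a < b" for a b
  proof -
    have "a * k \<le> (b - 1) * k" using that by (intro mult_le_mono1) simp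
    then have "i \<notin> block k b" if "i \<in> block k a" for i
      using that unfolding block_def atLeastAtMost_iff by linarith
    then show ?thesis by blast
  qed
  then show ?thesis
    unfolding disjoint_family_on_def by (metis inf_commute linorder_neqE_nat)
qed

definition some_block_sum_le :: "(nat \<Rightarrow> real) \<Rightarrow> nat \<Rightarrow> nat \<Rightarrow> real \<Rightarrow> bool" where
  "some_block_sum_le w k J c \<longleftrightarrow> (\<exists>j\<in>{1..J}. (\<Sum>i\<in>block k j. w i) \<le> c)"

definition level_blocks :: "real \<Rightarrow> nat \<Rightarrow> nat" where
  "level_blocks \<sigma> k = nat \<lfloor>exp (real k * \<sigma>) / real k\<rfloor>"

lemma level_blocks_mult_le: "real (level_blocks \<sigma> k * k) \<le> exp (real k * \<sigma>)"
proof (cases "k = 0")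
  case False
  have "real (level_blocks \<sigma> k) \<le> exp (real k * \<sigma>) / real k"
    unfolding level_blocks_def by (simp add: of_nat_nat)
  then show ?thesis
    using False by (simp add: le_divide_eq)
qed simp

lemma level_blocks_ge: "real (level_blocks \<sigma> k) \<ge> exp (real k * \<sigma>) / real k - 1"
  unfolding level_blocks_def by linarith

lemma eventually_exp_growth_times_block_failure_le:
  fixes \<sigma> \<theta> :: real
  assumes "0 \<le> \<theta>" "\<theta> < \<sigma>"
  shows "eventually (\<lambda>k. exp ((real k + 2) * \<sigma>)
           * exp (- real (level_blocks \<sigma> k) * (exp (- (real k * \<theta>)) / 2)) \<le> exp (- real k)) sequentially"
proof -
  define e where "e = \<sigma> - \<theta>"
  have "e > 0"
    using assms by (simp add: e_def)
  then have "eventually (\<lambda>k. (real k + 2) * \<sigma> + 1 / 2 - exp (real k * e) / (2 * real k) \<le> - real k)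
               sequentially"
    by real_asymp
  moreover have "eventually (\<lambda>k. k > 0) sequentially"
    by (rule eventually_gt_at_top)
  ultimately show ?thesis
  proof eventually_elim
    case (elim k)
    define p where "p = exp (- (real k * \<theta>)) / 2"
    have p: "0 < p" "p \<le> 1 / 2"
      using assms(1) by (auto simp: p_def)
    have "real k * \<sigma> + - (real k * \<theta>) = real k * e"
      by (simp add: e_def algebra_simps)
    then have "exp (real k * \<sigma>) * exp (- (real k * \<theta>)) = exp (real k * e)"
      by (simp only: exp_add[symmetric])
    then have E: "exp (real k * \<sigma>) / real k * p = exp (real k * e) / (2 * real k)"
      unfolding p_def by simp
    have "(exp (real k * \<sigma>) / real k - 1) * p \<le> real (level_blocks \<sigma> k) * p"
      using level_blocks_ge[where \<sigma> = \<sigma> and k = k] p(1) by (intro mult_right_mono) auto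
    then have "(real k + 2) * \<sigma> + - (real (level_blocks \<sigma> k) * p) \<le> - real k"
      using elim(1) E p(2) unfolding left_diff_distrib mult_1 by linarith
    then have "exp ((real k + 2) * \<sigma>) * exp (- real (level_blocks \<sigma> k) * p) \<le> exp (- real k)"
      by (simp only: exp_add[symmetric] mult_minus_left exp_le_cancel_iff)
    then show ?case
      by (simp add: p_def)
  qed
qed

lemma Inf_enat_Collect_eq:
  assumes "Inf {enat n | n. P n} = enat t"
  shows "P t"
proof -
  obtain m where "P m"
    using assms by (auto simp: Inf_enat_def split: if_splits)
  then have "Inf {enat n | n. P n} \<in> {enat n | n. P n}"
    by (intro wellorder_InfI[of "enat m"]) blast
  then show ?thesis
    using assms by auto
qed

lemma tau_le_window:
  assumes "even n" "even k" "k > 0" "Mk \<le> k" "k \<le> n"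
    and "(1 / real k) * (\<Sum>i\<in>{n - k + 1..n}. w i) \<le> q"
  shows "tau w Mk q \<le> enat n"
  unfolding tau_def using assms by (intro Inf_lower) auto

lemma tau_pos: "tau w k q = enat t \<Longrightarrow> t > 0"
  unfolding tau_def by (drule Inf_enat_Collect_eq) blast

text \<open>Although \<open>\<tau>\<^sub>k\<close> is not monotone in \<open>k\<close>, \<open>\<ell> \<le> k\<close> and the inequality defining \<open>\<ell>\<close> give
  \<open>T = \<tau>\<^sub>\<ell> \<le> exp (\<ell> (s + eps)) \<le> exp (k (s + eps))\<close>.\<close>

lemma T_time_le:
  fixes s :: real
  assumes "s + eps > 0" "even k" "k > 0" "A \<le> k"
    and "tau w k q \<le> enat n" "real n \<le> exp (real k * (s + eps))"
  shows "ennreal_of_enat (T_time w (ereal s) A eps q) \<le> ennreal (exp (real k * (s + eps)))"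
proof -
  define admissible where "admissible k \<longleftrightarrow> even k \<and> k > 0 \<and> k \<ge> A \<and>
    (\<exists>t. tau w k q = enat t \<and> ereal (ln (real t) / real k) \<le> ereal s + ereal eps)" for k
  have ell: "ell w (ereal s) A eps q = Inf {enat k | k. admissible k}"
    unfolding ell_def admissible_def ..
  have ln_le_iff: "ln (real t) \<le> real k * (s + eps) \<longleftrightarrow> real t \<le> exp (real k * (s + eps))"
    if "t > 0" for t k
    using that ln_le_cancel_iff[of "real t" "exp (real k * (s + eps))"] by simp
  obtain t where t: "tau w k q = enat t" "t \<le> n"
    using assms(5) by (cases "tau w k q") auto
  have "ln (real t) \<le> real k * (s + eps)"
    using t tau_pos[OF t(1)] assms(6) ln_le_iff by simp
  then have "admissible k"
    unfolding admissible_def using assms t by (auto simp: divide_le_eq mult.commute)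
  then have "ell w (ereal s) A eps q \<le> enat k"
    unfolding ell by (intro Inf_lower) blast
  then obtain k' where k': "ell w (ereal s) A eps q = enat k'" "k' \<le> k"
    by (cases "ell w (ereal s) A eps q") auto
  then obtain t' where t': "k' > 0" "tau w k' q = enat t'" "ln (real t') / real k' \<le> s + eps"
    using Inf_enat_Collect_eq[of admissible k'] ell by (auto simp: admissible_def)
  have "ln (real t') \<le> real k' * (s + eps)"
    using t' by (simp add: divide_le_eq mult.commute)
  also have "\<dots> \<le> real k * (s + eps)"
    using k' assms(1) by (intro mult_right_mono) auto
  finally have "real t' \<le> exp (real k * (s + eps))"
    using tau_pos[OF t'(2)] ln_le_iff by simp
  moreover have "T_time w (ereal s) A eps q = enat t'"
    unfolding T_time_def using k' t' by simp
  ultimately show ?thesis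
    by (simp add: ennreal_of_nat_eq_real_of_nat ennreal_leI)
qed

lemma T_time_le_of_some_block:
  fixes s q :: real
  assumes "s + eps > 0" "even k" "k > 0" "A \<le> k"
    and "some_block_sum_le w k (level_blocks (s + eps) k) (q * k)"
  shows "ennreal_of_enat (T_time w (ereal s) A eps q) \<le> ennreal (exp (real k * (s + eps)))"
proof -
  obtain j where j: "j \<in> {1..level_blocks (s + eps) k}" "(\<Sum>i\<in>block k j. w i) \<le> q * k"
    using assms(5) by (auto simp: some_block_sum_le_def)
  show ?thesis
  proof (rule T_time_le[OF assms(1-4)])
    show "tau w k q \<le> enat (j * k)"
      using assms j window_eq_block[of j k]
      by (intro tau_le_window) (auto simp: divide_le_eq mult.commute)
    have "j * k \<le> level_blocks (s + eps) k * k"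
      using j(1) by simp
    then show "real (j * k) \<le> exp (real k * (s + eps))"
      using level_blocks_mult_le[of "s + eps" k] of_nat_mono by (metis order_trans)
  qed
qed

section \<open>Integrability from a summable first-success bound\<close>

lemma ennreal_le_first_success:
  fixes t :: ennreal and G :: "nat \<Rightarrow> bool" and c :: "nat \<Rightarrow> real"
  assumes bound: "\<And>j. G j \<Longrightarrow> t \<le> ennreal (c j)" and ge_one: "\<And>j. c j \<ge> 1"
  shows "t \<le> ennreal (c 0) + (\<Sum>j. ennreal (c (Suc j)) * of_bool (\<not> G j))"
proof (cases "\<exists>j. G j")
  case True
  define j0 where "j0 = (LEAST j. G j)"
  have "G j0"
    unfolding j0_def using True by (rule LeastI_ex)
  then have "t \<le> ennreal (c j0)"
    by (rule bound)
  also have "\<dots> \<le> ennreal (c 0) + (\<Sum>j. ennreal (c (Suc j)) * of_bool (\<not> G j))"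
  proof (cases j0)
    case 0
    then show ?thesis
      by (intro add_increasing2) auto
  next
    case (Suc i)
    then have "\<not> G i"
      using not_less_Least[of i G] by (simp add: j0_def)
    then have "ennreal (c j0) \<le> (\<Sum>j. ennreal (c (Suc j)) * of_bool (\<not> G j))"
      using Suc sum_le_suminf[OF summableI, of "{i}" "\<lambda>j. ennreal (c (Suc j)) * of_bool (\<not> G j)"]
      by simp
    then show ?thesis
      by (intro add_increasing) auto
  qed
  finally show ?thesis .
next
  case False
  have "(\<Sum>j. ennreal (c (Suc j))) = \<top>"
  proof (rule ccontr)
    assume "(\<Sum>j. ennreal (c (Suc j))) \<noteq> \<top>"
    then have "(\<lambda>j. c (Suc j)) \<longlonglongrightarrow> 0"
      using ge_one by (intro summable_LIMSEQ_zero summable_suminf_not_top) (auto intro: order_trans[OF zero_le_one])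
    then have "1 \<le> (0::real)"
      using ge_one by (intro tendsto_lowerbound[of "\<lambda>j. c (Suc j)"]) auto
    then show False
      by simp
  qed
  then show ?thesis
    using False by simp
qed

lemma (in prob_space) nn_integral_finite_by_first_success:
  fixes T :: "'a \<Rightarrow> ennreal" and G :: "nat \<Rightarrow> 'a \<Rightarrow> bool" and c :: "nat \<Rightarrow> real"
  assumes sets: "\<And>j. {x \<in> space M. \<not> G j x} \<in> sets M"
    and bound: "\<And>x j. x \<in> space M \<Longrightarrow> G j x \<Longrightarrow> T x \<le> ennreal (c j)"
    and ge_one: "\<And>j. c j \<ge> 1"
    and summable: "summable (\<lambda>j. c (Suc j) * prob {x \<in> space M. \<not> G j x})"
  shows "(\<integral>\<^sup>+x. T x \<partial>M) < \<infinity>"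
proof -
  let ?F = "\<lambda>j. {x \<in> space M. \<not> G j x}"
  have c_nonneg: "c j \<ge> 0" for j
    using ge_one[of j] by linarith
  have "(\<integral>\<^sup>+x. T x \<partial>M) \<le> (\<integral>\<^sup>+x. ennreal (c 0) + (\<Sum>j. ennreal (c (Suc j)) * indicator (?F j) x) \<partial>M)"
  proof (rule nn_integral_mono)
    fix x
    assume "x \<in> space M"
    then show "T x \<le> ennreal (c 0) + (\<Sum>j. ennreal (c (Suc j)) * indicator (?F j) x)"
      using ennreal_le_first_success[of "\<lambda>j. G j x" "T x" c] bound ge_one
      by (simp add: indicator_def)
  qed
  also have "\<dots> = ennreal (c 0) + (\<integral>\<^sup>+x. (\<Sum>j. ennreal (c (Suc j)) * indicator (?F j) x) \<partial>M)"
    using sets by (subst nn_integral_add) (auto simp: emeasure_space_1)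
  also have "(\<integral>\<^sup>+x. (\<Sum>j. ennreal (c (Suc j)) * indicator (?F j) x) \<partial>M)
               = (\<Sum>j. ennreal (c (Suc j) * prob (?F j)))"
    using sets c_nonneg
    by (subst nn_integral_suminf) (auto simp: nn_integral_cmult_indicator emeasure_eq_measure ennreal_mult)
  also have "ennreal (c 0) + (\<Sum>j. ennreal (c (Suc j) * prob (?F j))) < \<infinity>"
    using summable c_nonneg by (simp add: suminf_ennreal2 less_top[symmetric])
  finally show ?thesis .
qed

section \<open>I.i.d. sequences with exponential moments\<close>

lemma (in prob_space) exists_level_below_lower_tail_pos:
  fixes Y :: "'a \<Rightarrow> real"
  assumes [measurable]: "Y \<in> borel_measurable M" and "prob {x \<in> space M. Y x < q} > 0"
  shows "\<exists>q' < q. prob {x \<in> space M. Y x < q'} > 0"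
proof (rule ccontr)
  assume none: "\<not> ?thesis"
  define B where "B n = {x \<in> space M. Y x < q - 1 / Suc n}" for n
  have "prob (B n) = 0" for n
  proof -
    have "q - 1 / Suc n < q"
      by simp
    then have "\<not> prob (B n) > 0"
      using none unfolding B_def by blast
    then show ?thesis
      using measure_nonneg[of M "B n"] by linarith
  qed
  then have "emeasure M (\<Union>n. B n) = 0"
    by (intro emeasure_UN_eq_0) (auto simp: B_def emeasure_eq_measure)
  moreover have "{x \<in> space M. Y x < q} \<subseteq> (\<Union>n. B n)"
  proof
    fix x assume x: "x \<in> {x \<in> space M. Y x < q}"
    then obtain n where "inverse (real (Suc n)) < q - Y x"
      using reals_Archimedean[of "q - Y x"] by auto
    then have "x \<in> B n"
      using x by (auto simp: B_def inverse_eq_divide)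
    then show "x \<in> (\<Union>n. B n)"
      by blast
  qed
  moreover have "(\<Union>n. B n) \<in> sets M"
    unfolding B_def by measurable
  ultimately have "emeasure M {x \<in> space M. Y x < q} = 0"
    by (metis (no_types, lifting) emeasure_mono le_zero_eq)
  then have "prob {x \<in> space M. Y x < q} = 0"
    by (simp add: emeasure_eq_measure)
  then show False
    using assms by simp
qed

locale iid_exp_moments = prob_space M for M :: "'a measure" +
  fixes X :: "nat \<Rightarrow> 'a \<Rightarrow> real"
  assumes indep: "indep_vars (\<lambda>_. borel) X {1..}"
    and identically_distributed: "\<And>i. i \<ge> 1 \<Longrightarrow> distr M borel (X i) = distr M borel (X 1)"
    and integrable_exp: "\<And>\<alpha>. integrable M (\<lambda>x. exp (\<alpha> * X 1 x))"
begin

text \<open>Stops the simplifier from rewriting \<open>X 1\<close> to \<open>X (Suc 0)\<close>, which the facts about \<open>X 1\<close>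
  would no longer match.\<close>

declare One_nat_def [simp del]

definition shifted_mgf :: "real \<Rightarrow> real \<Rightarrow> real" where
  "shifted_mgf q a = (\<integral>x. exp (a * (X 1 x - q)) \<partial>M)"

lemma measurable_X: "i \<ge> 1 \<Longrightarrow> X i \<in> borel_measurable M"
  using indep unfolding indep_vars_def by auto

lemma measurable_X1 [measurable]: "X 1 \<in> borel_measurable M"
  using measurable_X by simp

lemma integrable_exp_shifted: "integrable M (\<lambda>x. exp (a * (X 1 x - q)))"
proof -
  have "(\<lambda>x. exp (a * (X 1 x - q))) = (\<lambda>x. exp (- a * q) * exp (a * X 1 x))"
    by (auto simp: fun_eq_iff mult_exp_exp algebra_simps)
  then show ?thesis
    using integrable_mult_right[OF integrable_exp] by metis
qed

lemma
  assumes "i \<ge> 1"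
  shows integrable_exp_shifted_X: "integrable M (\<lambda>x. exp (a * (X i x - q)))"
    and integral_exp_shifted_X: "(\<integral>x. exp (a * (X i x - q)) \<partial>M) = shifted_mgf q a"
proof -
  have g: "(\<lambda>y. exp (a * (y - q))) \<in> borel_measurable borel"
    by measurable
  have "integrable (distr M borel (X 1)) (\<lambda>y. exp (a * (y - q)))"
    using integrable_distr_eq[OF measurable_X1 g] integrable_exp_shifted by simp
  then show "integrable M (\<lambda>x. exp (a * (X i x - q)))"
    using integrable_distr_eq[OF measurable_X[OF assms] g] identically_distributed[OF assms] by simp
  have "(\<integral>x. exp (a * (X i x - q)) \<partial>M) = (\<integral>y. exp (a * (y - q)) \<partial>distr M borel (X i))"
    using integral_distr[OF measurable_X[OF assms] g] by simp
  also have "\<dots> = shifted_mgf q a"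
    unfolding shifted_mgf_def identically_distributed[OF assms]
    using integral_distr[OF measurable_X1 g] by simp
  finally show "(\<integral>x. exp (a * (X i x - q)) \<partial>M) = shifted_mgf q a" .
qed

lemma
  assumes "finite I" "I \<subseteq> {1..}"
  shows integrable_exp_sum: "integrable M (\<lambda>x. exp (a * (\<Sum>i\<in>I. X i x - q)))"
    and integral_exp_sum: "(\<integral>x. exp (a * (\<Sum>i\<in>I. X i x - q)) \<partial>M) = shifted_mgf q a ^ card I"
proof -
  have prod: "(\<lambda>x. exp (a * (\<Sum>i\<in>I. X i x - q))) = (\<lambda>x. \<Prod>i\<in>I. exp (a * (X i x - q)))"
    using assms(1) by (auto simp: fun_eq_iff sum_distrib_left exp_sum)
  have indep_I: "indep_vars (\<lambda>_. borel) (\<lambda>i x. exp (a * (X i x - q))) I"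
    by (rule indep_vars_compose2[where X = X and M' = "\<lambda>_. borel"])
       (auto intro: indep_vars_subset[OF indep assms(2)])
  have int: "\<And>i. i \<in> I \<Longrightarrow> integrable M (\<lambda>x. exp (a * (X i x - q)))"
    using integrable_exp_shifted_X assms(2) by auto
  show "integrable M (\<lambda>x. exp (a * (\<Sum>i\<in>I. X i x - q)))"
    unfolding prod by (rule indep_vars_integrable[OF assms(1) indep_I int])
  show "(\<integral>x. exp (a * (\<Sum>i\<in>I. X i x - q)) \<partial>M) = shifted_mgf q a ^ card I"
    unfolding prod using indep_vars_lebesgue_integral[OF assms(1) indep_I int]
      integral_exp_shifted_X assms(2) by (auto simp: subset_iff)
qed

lemma integrable_X1: "integrable M (X 1)"
proof (rule Bochner_Integration.integrable_bound)
  show "integrable M (\<lambda>x. exp (1 * X 1 x) + exp ((-1) * X 1 x))"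
    by (intro Bochner_Integration.integrable_add integrable_exp)
  show "AE x in M. norm (X 1 x) \<le> norm (exp (1 * X 1 x) + exp ((-1) * X 1 x))"
  proof (intro AE_I2)
    fix x
    show "norm (X 1 x) \<le> norm (exp (1 * X 1 x) + exp ((-1) * X 1 x))"
      using exp_ge_add_one_self[of "X 1 x"] exp_ge_add_one_self[of "- X 1 x"]
      by (smt (verit) exp_gt_zero real_norm_def)
  qed
qed simp

lemma shifted_mgf_pos: "shifted_mgf q a > 0"
proof -
  have "shifted_mgf q a \<noteq> 0"
  proof
    assume "shifted_mgf q a = 0"
    then have "AE x in M. exp (a * (X 1 x - q)) = 0"
      unfolding shifted_mgf_def
      by (subst (asm) integral_nonneg_eq_0_iff_AE) (auto intro: integrable_exp_shifted)
    then show False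
      using AE_False by simp
  qed
  moreover have "shifted_mgf q a \<ge> 0"
    unfolding shifted_mgf_def by (intro integral_nonneg_AE) simp
  ultimately show ?thesis
    by linarith
qed

lemma shifted_mgf_0 [simp]: "shifted_mgf q 0 = 1"
  by (simp add: shifted_mgf_def prob_space)

lemma shifted_mgf_ge_linear: "shifted_mgf q a \<ge> 1 + a * (expectation (X 1) - q)"
proof -
  have "(\<integral>x. 1 + a * (X 1 x - q) \<partial>M) \<le> shifted_mgf q a"
    unfolding shifted_mgf_def using integrable_X1
    by (intro integral_mono integrable_exp_shifted exp_ge_add_one_self) auto
  moreover have "(\<integral>x. 1 + a * (X 1 x - q) \<partial>M) = 1 + a * (expectation (X 1) - q)"
    using integrable_X1 by (simp add: algebra_simps prob_space)
  ultimately show ?thesis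
    by simp
qed

lemma shifted_mgf_ge_lower_tail:
  assumes "a \<le> 0"
  shows "shifted_mgf q a \<ge> exp (a * (q' - q)) * prob {x \<in> space M. X 1 x < q'}"
proof -
  have "(\<integral>x. exp (a * (q' - q)) * indicator {x \<in> space M. X 1 x < q'} x \<partial>M) \<le> shifted_mgf q a"
    unfolding shifted_mgf_def
  proof (rule integral_mono)
    fix x
    show "exp (a * (q' - q)) * indicator {x \<in> space M. X 1 x < q'} x \<le> exp (a * (X 1 x - q))"
      using assms mult_left_mono_neg[of "X 1 x - q" "q' - q" a] by (auto simp: indicator_def)
  qed (auto intro!: integrable_exp_shifted integrable_real_indicator simp: emeasure_eq_measure)
  then show ?thesis
    by simp
qed

lemma convex_shifted_mgf: "convex_on UNIV (shifted_mgf q)"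
proof (rule convex_onI)
  fix t a b :: real
  assume t: "0 < t" "t < 1"
  have "shifted_mgf q ((1 - t) *\<^sub>R a + t *\<^sub>R b)
          \<le> (\<integral>x. (1 - t) * exp (a * (X 1 x - q)) + t * exp (b * (X 1 x - q)) \<partial>M)"
    unfolding shifted_mgf_def
  proof (rule integral_mono)
    fix x
    show "exp (((1 - t) *\<^sub>R a + t *\<^sub>R b) * (X 1 x - q))
            \<le> (1 - t) * exp (a * (X 1 x - q)) + t * exp (b * (X 1 x - q))"
      using convex_onD[OF exp_convex, of t "a * (X 1 x - q)" "b * (X 1 x - q)"] t
      by (simp add: algebra_simps)
  qed (auto intro!: integrable_exp_shifted Bochner_Integration.integrable_add integrable_mult_right)
  also have "\<dots> = (1 - t) * shifted_mgf q a + t * shifted_mgf q b"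
    unfolding shifted_mgf_def
    by (subst Bochner_Integration.integral_add) (auto intro!: integrable_exp_shifted)
  finally show "shifted_mgf q ((1 - t) *\<^sub>R a + t *\<^sub>R b) \<le> (1 - t) * shifted_mgf q a + t * shifted_mgf q b" .
qed simp

lemma continuous_shifted_mgf: "continuous_on UNIV (shifted_mgf q)"
  by (rule convex_on_continuous[OF open_UNIV convex_shifted_mgf])

lemma shifted_mgf_second_difference_le:
  assumes "\<bar>a\<bar> \<le> R" "\<bar>h\<bar> \<le> 1"
  shows "shifted_mgf q (a + h) + shifted_mgf q (a - h) - 2 * shifted_mgf q a
           \<le> 4 * h\<^sup>2 * (shifted_mgf q (R + 2) + shifted_mgf q (- (R + 2)))"
proof -
  let ?e = "\<lambda>b x. exp (b * (X 1 x - q))"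
  have "shifted_mgf q (a + h) + shifted_mgf q (a - h) - 2 * shifted_mgf q a
          = (\<integral>x. ?e (a + h) x + ?e (a - h) x - 2 * ?e a x \<partial>M)"
    unfolding shifted_mgf_def using integrable_exp_shifted
    by (simp add: Bochner_Integration.integral_diff Bochner_Integration.integral_add)
  also have "\<dots> \<le> (\<integral>x. 4 * h\<^sup>2 * (?e (R + 2) x + ?e (- (R + 2)) x) \<partial>M)"
    using exp_second_difference_le[OF assms, of "X 1 _ - q"] integrable_exp_shifted
    by (intro integral_mono) auto
  also have "\<dots> = 4 * h\<^sup>2 * (shifted_mgf q (R + 2) + shifted_mgf q (- (R + 2)))"
    unfolding shifted_mgf_def using integrable_exp_shifted
    by (simp add: Bochner_Integration.integral_add)
  finally show ?thesis .
qed

lemma cramer_rate_eq_minimum: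
  assumes "\<And>b. shifted_mgf q a0 \<le> shifted_mgf q b"
  shows "cramer_rate M (X 1) q = ereal (- ln (shifted_mgf q a0))"
proof -
  have "\<alpha> * q - ln (\<integral>x. exp (\<alpha> * X 1 x) \<partial>M) = - ln (shifted_mgf q \<alpha>)" for \<alpha>
  proof -
    have "shifted_mgf q \<alpha> = (\<integral>x. exp (- \<alpha> * q) * exp (\<alpha> * X 1 x) \<partial>M)"
      unfolding shifted_mgf_def by (simp add: exp_add[symmetric] algebra_simps)
    then have "(\<integral>x. exp (\<alpha> * X 1 x) \<partial>M) = exp (\<alpha> * q) * shifted_mgf q \<alpha>"
      by (simp add: exp_minus field_simps)
    then show ?thesis
      using shifted_mgf_pos[of q \<alpha>] by (simp add: ln_mult)
  qed
  then show ?thesis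
    unfolding cramer_rate_def
    using assms shifted_mgf_pos by (intro SUP_eqI) auto
qed

lemma shifted_mgf_gt_one_far_left:
  assumes "prob {x \<in> space M. X 1 x < q} > 0"
  shows "\<exists>R > 0. \<forall>b < - R. shifted_mgf q b > 1"
proof -
  obtain q' where q': "q' < q" "prob {x \<in> space M. X 1 x < q'} > 0"
    using exists_level_below_lower_tail_pos[OF measurable_X1 assms] by blast
  define p where "p = prob {x \<in> space M. X 1 x < q'}"
  have p: "0 < p" "p \<le> 1"
    using q' by (auto simp: p_def)
  define R where "R = (1 - ln p) / (q - q')"
  have "ln p \<le> 0"
    using p by simp
  then have "R > 0"
    unfolding R_def using q' by (intro divide_pos_pos) auto
  moreover have "shifted_mgf q b > 1" if "b < - R" for b
  proof -
    have "1 - ln p = R * (q - q')"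
      unfolding R_def using q' by simp
    also have "\<dots> < (- b) * (q - q')"
      using that q' by (intro mult_strict_right_mono) auto
    also have "\<dots> = b * (q' - q)"
      by (simp add: algebra_simps)
    finally have "1 - ln p < b * (q' - q)" .
    then have "exp 1 < exp (b * (q' - q) + ln p)"
      by simp
    also have "\<dots> = exp (b * (q' - q)) * p"
      using p by (simp add: exp_add)
    also have "\<dots> \<le> shifted_mgf q b"
      unfolding p_def using that \<open>R > 0\<close> by (intro shifted_mgf_ge_lower_tail) auto
    finally have "exp 1 < shifted_mgf q b" .
    moreover have "1 < exp (1::real)"
      by simp
    ultimately show ?thesis
      by linarith
  qed
  ultimately show ?thesis
    by blast
qed

lemma exists_minimum_shifted_mgf:
  assumes "q < expectation (X 1)" "prob {x \<in> space M. X 1 x < q} > 0"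
  shows "\<exists>R > 0. \<exists>m \<in> {- R..0}. (\<forall>b. shifted_mgf q m \<le> shifted_mgf q b)
                              \<and> (\<forall>b < - R. shifted_mgf q m < shifted_mgf q b)"
proof -
  let ?f = "shifted_mgf q"
  obtain R where R: "R > 0" "\<And>b. b < - R \<Longrightarrow> ?f b > 1"
    using shifted_mgf_gt_one_far_left[OF assms(2)] by blast
  have ge_one: "?f b \<ge> 1" if "b \<ge> 0" for b
    using shifted_mgf_ge_linear[where q = q and a = b] assms(1) that
      mult_nonneg_nonneg[of b "expectation (X 1) - q"]
    by linarith
  have "compact {- R..0}" "{- R..0} \<noteq> {}"
    using R by auto
  then obtain m where m: "m \<in> {- R..0}" "\<And>y. y \<in> {- R..0} \<Longrightarrow> ?f m \<le> ?f y"
    using continuous_attains_inf[OF \<open>compact {- R..0}\<close> \<open>{- R..0} \<noteq> {}\<close>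
        continuous_on_subset[OF continuous_shifted_mgf subset_UNIV]]
    by blast
  have "?f m \<le> 1"
    using m(2)[of 0] R by simp
  have global: "?f m \<le> ?f b" for b
  proof (cases "b \<in> {- R..0}")
    case False
    then have "b < - R \<or> b \<ge> 0"
      by auto
    then show ?thesis
      using R(2)[of b] ge_one[of b] \<open>?f m \<le> 1\<close> by linarith
  qed (rule m(2))
  have strict: "?f m < ?f b" if "b < - R" for b
    using R(2)[OF that] \<open>?f m \<le> 1\<close> by linarith
  show ?thesis
    using R(1) m(1) global strict by blast
qed

text \<open>The lower bound below needs the minimum to be strictly exceeded to the left of the
  minimiser, hence the leftmost one.\<close>

lemma exists_leftmost_minimum:
  assumes "q < expectation (X 1)" "prob {x \<in> space M. X 1 x < q} > 0"
  shows "\<exists>a0 \<le> 0. (\<forall>b. shifted_mgf q a0 \<le> shifted_mgf q b)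
                    \<and> (\<forall>h > 0. shifted_mgf q a0 < shifted_mgf q (a0 - h))"
proof -
  let ?f = "shifted_mgf q"
  obtain R m where R: "R > 0" and m: "m \<in> {- R..0}" "\<And>b. ?f m \<le> ?f b"
      "\<And>b. b < - R \<Longrightarrow> ?f m < ?f b"
    using exists_minimum_shifted_mgf[OF assms] by blast
  define S where "S = {- R..0} \<inter> {b. ?f b \<le> ?f m}"
  have "compact S"
    unfolding S_def
    by (intro compact_Int_closed compact_Icc closed_Collect_le continuous_shifted_mgf continuous_on_const)
  have "S \<noteq> {}"
    using m by (auto simp: S_def)
  obtain a0 where a0: "a0 \<in> S" "\<And>y. y \<in> S \<Longrightarrow> a0 \<le> y"
    using continuous_attains_inf[OF \<open>compact S\<close> \<open>S \<noteq> {}\<close> continuous_on_id] by auto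
  have "?f a0 = ?f m"
    using a0(1) m(2)[of a0] by (auto simp: S_def)
  have "?f a0 < ?f (a0 - h)" if "h > 0" for h
  proof (cases "a0 - h \<in> {- R..0}")
    case True
    then have "a0 - h \<notin> S"
      using a0(2)[of "a0 - h"] that by auto
    then show ?thesis
      using True m(2)[of "a0 - h"] \<open>?f a0 = ?f m\<close> by (auto simp: S_def)
  next
    case False
    then have "a0 - h < - R"
      using a0(1) that by (auto simp: S_def)
    then show ?thesis
      using m(3) \<open>?f a0 = ?f m\<close> by simp
  qed
  moreover have "a0 \<le> 0" "?f a0 \<le> ?f b" for b
    using a0(1) m(2)[of b] \<open>?f a0 = ?f m\<close> by (auto simp: S_def)
  ultimately show ?thesis
    by blast
qed

section \<open>A lower large deviation bound\<close>

text \<open>Second differences of \<open>shifted_mgf\<close> are \<open>O(h\<^sup>2)\<close>, which loses against the first-order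
  gain \<open>exp (h \<eta>)\<close> for small \<open>h\<close>.\<close>

lemma shifted_mgf_step_left_of_minimum:
  assumes min: "\<And>b. shifted_mgf q a0 \<le> shifted_mgf q b" and "\<eta> > 0"
  shows "\<exists>h. 0 < h \<and> h \<le> 1 \<and> shifted_mgf q (a0 - 2 * h) * exp (- h * \<eta>) < shifted_mgf q (a0 - h)"
proof -
  let ?f = "shifted_mgf q"
  define R where "R = \<bar>a0\<bar> + 1"
  define K where "K = 4 * (?f (R + 2) + ?f (- (R + 2)))"
  have "K > 0"
    using shifted_mgf_pos by (simp add: K_def add_pos_pos)
  define h where "h = min 1 (?f a0 * \<eta> / (2 * K + 1))"
  have "?f a0 * \<eta> > 0"
    using shifted_mgf_pos \<open>\<eta> > 0\<close> by simp
  then have h: "0 < h" "h \<le> 1" "h \<le> ?f a0 * \<eta> / (2 * K + 1)"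
    using \<open>K > 0\<close> by (auto simp: h_def)
  have second_diff: "?f (a + h) + ?f (a - h) - 2 * ?f a \<le> K * h\<^sup>2" if "\<bar>a\<bar> \<le> R" for a
    using shifted_mgf_second_difference_le[OF that, of h q] h by (simp add: K_def algebra_simps)
  have "?f (a0 - h) - ?f a0 \<le> K * h\<^sup>2"
    using second_diff[of a0] min[of "a0 + h"] by (simp add: R_def)
  moreover have "?f a0 + ?f (a0 - 2 * h) - 2 * ?f (a0 - h) \<le> K * h\<^sup>2"
    using second_diff[of "a0 - h"] h by (simp add: R_def algebra_simps)
  ultimately have "?f (a0 - 2 * h) \<le> ?f (a0 - h) + 2 * K * h\<^sup>2"
    by linarith
  also have "\<dots> < ?f (a0 - h) + ?f a0 * \<eta> * h"
  proof -
    have "2 * K * h + h \<le> ?f a0 * \<eta>"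
      using h(3) \<open>K > 0\<close> by (simp add: le_divide_eq algebra_simps)
    then have "2 * K * h < ?f a0 * \<eta>"
      using h(1) by linarith
    then show ?thesis
      using h(1) by (simp add: power2_eq_square)
  qed
  also have "\<dots> \<le> ?f (a0 - h) * (1 + h * \<eta>)"
    using min[of "a0 - h"] h(1) \<open>\<eta> > 0\<close> by (simp add: algebra_simps)
  also have "\<dots> \<le> ?f (a0 - h) * exp (h * \<eta>)"
    using shifted_mgf_pos[of q "a0 - h"] exp_ge_add_one_self[of "h * \<eta>"]
    by (intro mult_left_mono) (auto simp: add.commute)
  finally have "?f (a0 - 2 * h) * exp (- h * \<eta>) < ?f (a0 - h) * exp (h * \<eta>) * exp (- h * \<eta>)"
    by simp
  then show ?thesis
    using h by (intro exI[of _ h]) (simp add: mult.assoc exp_add[symmetric])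
qed

lemma shifted_mgf_power_le_decomposition:
  assumes "finite I" "I \<subseteq> {1..}" "\<alpha> \<le> 0" "h > 0"
  shows "shifted_mgf q \<alpha> ^ card I
           \<le> exp (- \<alpha> * t) * prob {x \<in> space M. (\<Sum>i\<in>I. X i x) \<le> q * card I}
             + shifted_mgf q (\<alpha> + h) ^ card I + shifted_mgf q (\<alpha> - h) ^ card I * exp (- h * t)"
proof -
  define Z where "Z x = (\<Sum>i\<in>I. X i x - q)" for x
  define S where "S = {x \<in> space M. Z x \<le> 0}"
  have "Z \<in> borel_measurable M"
    unfolding Z_def using measurable_X assms(2) by (intro borel_measurable_sum) auto
  then have S: "S \<in> sets M"
    unfolding S_def by measurable
  have S_eq: "S = {x \<in> space M. (\<Sum>i\<in>I. X i x) \<le> q * card I}"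
    by (simp add: S_def Z_def sum_subtractf mult.commute)
  have int: "integrable M (\<lambda>x. exp (a * Z x))" for a
    unfolding Z_def using integrable_exp_sum[OF assms(1,2)] .
  have "shifted_mgf q \<alpha> ^ card I = (\<integral>x. exp (\<alpha> * Z x) \<partial>M)"
    unfolding Z_def using integral_exp_sum[OF assms(1,2)] by simp
  also have "\<dots> \<le> (\<integral>x. exp (- \<alpha> * t) * indicator S x + exp ((\<alpha> + h) * Z x)
                       + exp ((\<alpha> - h) * Z x) * exp (- h * t) \<partial>M)"
  proof (rule integral_mono)
    fix x
    assume "x \<in> space M"
    then show "exp (\<alpha> * Z x) \<le> exp (- \<alpha> * t) * indicator S x + exp ((\<alpha> + h) * Z x)
                                + exp ((\<alpha> - h) * Z x) * exp (- h * t)"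
      using exp_le_three_regimes[OF assms(3,4), of "Z x" t] by (simp add: S_def indicator_def)
  qed (use S int in \<open>auto intro!: integrable_real_indicator simp: emeasure_eq_measure\<close>)
  also have "\<dots> = exp (- \<alpha> * t) * prob S + shifted_mgf q (\<alpha> + h) ^ card I
                    + shifted_mgf q (\<alpha> - h) ^ card I * exp (- h * t)"
    using S int integral_exp_sum[OF assms(1,2)]
    by (simp add: Bochner_Integration.integral_add integrable_real_indicator emeasure_eq_measure Z_def)
  finally show ?thesis
    using S_eq by simp
qed

lemma prob_sum_le_ge_tilted:
  assumes "finite I" "I \<subseteq> {1..}" "\<alpha> \<le> 0" "h > 0"
    and "shifted_mgf q (\<alpha> + h) ^ card I \<le> shifted_mgf q \<alpha> ^ card I / 4"
    and "(shifted_mgf q (\<alpha> - h) * exp (- h * \<eta>)) ^ card I \<le> shifted_mgf q \<alpha> ^ card I / 4"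
  shows "(exp (\<alpha> * \<eta>) * shifted_mgf q \<alpha>) ^ card I / 2
           \<le> prob {x \<in> space M. (\<Sum>i\<in>I. X i x) \<le> q * card I}"
proof -
  let ?P = "prob {x \<in> space M. (\<Sum>i\<in>I. X i x) \<le> q * card I}"
  have "shifted_mgf q \<alpha> ^ card I
          \<le> exp (- \<alpha> * (\<eta> * card I)) * ?P + shifted_mgf q (\<alpha> + h) ^ card I
            + (shifted_mgf q (\<alpha> - h) * exp (- h * \<eta>)) ^ card I"
    using shifted_mgf_power_le_decomposition[OF assms(1-4), of q "\<eta> * card I"]
    by (simp add: power_mult_distrib exp_of_nat_mult[symmetric] algebra_simps)
  then have "shifted_mgf q \<alpha> ^ card I / 2 \<le> exp (- \<alpha> * (\<eta> * card I)) * ?P"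
    using assms(5,6) by linarith
  then have "exp (\<alpha> * (\<eta> * card I)) * (shifted_mgf q \<alpha> ^ card I / 2) \<le> ?P"
    by (simp add: exp_minus field_simps)
  then show ?thesis
    by (simp add: power_mult_distrib exp_of_nat_mult[symmetric] algebra_simps)
qed

lemma exists_tilt_left_of_minimum:
  assumes "a0 \<le> 0" "\<And>b. shifted_mgf q a0 \<le> shifted_mgf q b"
    and "\<And>h. h > 0 \<Longrightarrow> shifted_mgf q a0 < shifted_mgf q (a0 - h)" and "\<delta> > 0"
  shows "\<exists>\<alpha> h \<eta>. \<alpha> \<le> 0 \<and> h > 0 \<and> shifted_mgf q (\<alpha> + h) < shifted_mgf q \<alpha>
           \<and> shifted_mgf q (\<alpha> - h) * exp (- h * \<eta>) < shifted_mgf q \<alpha>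
           \<and> shifted_mgf q a0 * exp (- \<delta>) \<le> exp (\<alpha> * \<eta>) * shifted_mgf q \<alpha>"
proof -
  let ?f = "shifted_mgf q"
  define \<eta> where "\<eta> = \<delta> / (1 - a0)"
  have "\<eta> > 0"
    using assms(1,4) by (simp add: \<eta>_def)
  obtain h where h: "0 < h" "h \<le> 1" "?f (a0 - 2 * h) * exp (- h * \<eta>) < ?f (a0 - h)"
    using shifted_mgf_step_left_of_minimum[OF assms(2) \<open>\<eta> > 0\<close>] by blast
  define \<alpha> where "\<alpha> = a0 - h"
  have "- \<delta> \<le> \<alpha> * \<eta>"
    using assms(1,4) h(2) mult_right_mono[of "a0 - 1" \<alpha> \<eta>] \<open>\<eta> > 0\<close>
    by (simp add: \<eta>_def \<alpha>_def field_simps)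
  then have "?f a0 * exp (- \<delta>) \<le> exp (\<alpha> * \<eta>) * ?f \<alpha>"
    using assms(2)[of \<alpha>] shifted_mgf_pos[of q a0] by (simp add: mult.commute mult_mono)
  moreover have "?f (\<alpha> + h) < ?f \<alpha>" "?f (\<alpha> - h) * exp (- h * \<eta>) < ?f \<alpha>"
    using assms(3)[OF h(1)] h(3) by (simp_all add: \<alpha>_def algebra_simps)
  moreover have "\<alpha> \<le> 0"
    using assms(1) h(1) by (simp add: \<alpha>_def)
  ultimately show ?thesis
    using h(1) by blast
qed

text \<open>Tilting slightly left of the minimiser makes both error terms of the decomposition
  exponentially smaller than the main term, at the cost of the factor \<open>exp (- \<delta>)\<close>.\<close>

lemma eventually_prob_sum_le_ge:
  assumes "a0 \<le> 0" "\<And>b. shifted_mgf q a0 \<le> shifted_mgf q b"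
    and "\<And>h. h > 0 \<Longrightarrow> shifted_mgf q a0 < shifted_mgf q (a0 - h)" and "\<delta> > 0"
  shows "eventually (\<lambda>m. \<forall>I. finite I \<longrightarrow> I \<subseteq> {1..} \<longrightarrow> card I = m \<longrightarrow>
           (shifted_mgf q a0 * exp (- \<delta>)) ^ m / 2 \<le> prob {x \<in> space M. (\<Sum>i\<in>I. X i x) \<le> q * m})
           sequentially"
proof -
  obtain \<alpha> h \<eta> where "\<alpha> \<le> 0" "h > 0"
    and B: "shifted_mgf q (\<alpha> + h) < shifted_mgf q \<alpha>"
    and C: "shifted_mgf q (\<alpha> - h) * exp (- h * \<eta>) < shifted_mgf q \<alpha>"
    and tilt: "shifted_mgf q a0 * exp (- \<delta>) \<le> exp (\<alpha> * \<eta>) * shifted_mgf q \<alpha>"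
    using exists_tilt_left_of_minimum[OF assms] by blast
  define A where "A = shifted_mgf q \<alpha>"
  have "A > 0"
    using shifted_mgf_pos by (simp add: A_def)
  have "(\<lambda>m. (shifted_mgf q (\<alpha> + h) / A) ^ m) \<longlonglongrightarrow> 0"
    "(\<lambda>m. (shifted_mgf q (\<alpha> - h) * exp (- h * \<eta>) / A) ^ m) \<longlonglongrightarrow> 0"
    using B C shifted_mgf_pos[of q "\<alpha> + h"] shifted_mgf_pos[of q "\<alpha> - h"]
    by (auto simp: A_def intro!: LIMSEQ_power_zero)
  then have "eventually (\<lambda>m. (shifted_mgf q (\<alpha> + h) / A) ^ m < 1 / 4
                     \<and> (shifted_mgf q (\<alpha> - h) * exp (- h * \<eta>) / A) ^ m < 1 / 4) sequentially"
    by (intro eventually_conj order_tendstoD) auto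
  then show ?thesis
  proof (rule eventually_mono, intro allI impI)
    fix m and I :: "nat set"
    assume small: "(shifted_mgf q (\<alpha> + h) / A) ^ m < 1 / 4
                     \<and> (shifted_mgf q (\<alpha> - h) * exp (- h * \<eta>) / A) ^ m < 1 / 4"
      and I: "finite I" "I \<subseteq> {1..}" "card I = m"
    have "(exp (\<alpha> * \<eta>) * A) ^ m / 2 \<le> prob {x \<in> space M. (\<Sum>i\<in>I. X i x) \<le> q * m}"
      using prob_sum_le_ge_tilted[OF I(1,2) \<open>\<alpha> \<le> 0\<close> \<open>h > 0\<close>, of q \<eta>] small I(3) \<open>A > 0\<close>
      by (simp add: A_def power_divide divide_simps)
    moreover have "(shifted_mgf q a0 * exp (- \<delta>)) ^ m \<le> (exp (\<alpha> * \<eta>) * A) ^ m"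
      using tilt shifted_mgf_pos[of q a0] by (intro power_mono) (auto simp: A_def)
    ultimately show "(shifted_mgf q a0 * exp (- \<delta>)) ^ m / 2 \<le> prob {x \<in> space M. (\<Sum>i\<in>I. X i x) \<le> q * m}"
      by linarith
  qed
qed

section \<open>Integrability of \<open>T\<close>\<close>

lemma sets_no_block_sum_le: "{x \<in> space M. \<not> some_block_sum_le (\<lambda>i. X i x) k J c} \<in> sets M"
proof -
  have [measurable]: "(\<lambda>x. \<Sum>i\<in>block k j. X i x) \<in> borel_measurable M" for j
    using measurable_X block_subset by (intro borel_measurable_sum) auto
  show ?thesis
    unfolding some_block_sum_le_def by measurable
qed

lemma prob_no_block_sum_le:
  assumes "\<And>j. j \<in> {1..J} \<Longrightarrow> p \<le> prob {x \<in> space M. (\<Sum>i\<in>block k j. X i x) \<le> c}"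
  shows "prob {x \<in> space M. \<not> some_block_sum_le (\<lambda>i. X i x) k J c} \<le> exp (- real J * p)"
proof (cases "J = 0")
  case False
  define Y where "Y j x = (\<Sum>i\<in>block k j. X i x)" for j x
  have [measurable]: "Y j \<in> borel_measurable M" for j
    unfolding Y_def using measurable_X block_subset by (intro borel_measurable_sum) auto
  have "indep_vars (\<lambda>j. PiM (block k j) (\<lambda>_. borel)) (\<lambda>j x. restrict (\<lambda>i. X i x) (block k j)) {1..J}"
    by (rule indep_vars_restrict[OF indep block_subset disjoint_family_block])
  then have "indep_vars (\<lambda>_. borel) (\<lambda>j x. (\<lambda>g. \<Sum>i\<in>block k j. g i) (restrict (\<lambda>i. X i x) (block k j))) {1..J}"
    by (rule indep_vars_compose2) measurable
  then have indep_Y: "indep_vars (\<lambda>_. borel) Y {1..J}"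
    by (rule indep_vars_cong[THEN iffD1, rotated -1]) (auto simp: Y_def)
  have no_block: "{x \<in> space M. \<not> some_block_sum_le (\<lambda>i. X i x) k J c}
                    = (\<Inter>j\<in>{1..J}. Y j -` {c<..} \<inter> space M)"
    using False by (auto simp: some_block_sum_le_def Y_def not_le)
  have "prob {x \<in> space M. \<not> some_block_sum_le (\<lambda>i. X i x) k J c}
          = (\<Prod>j\<in>{1..J}. prob (Y j -` {c<..} \<inter> space M))"
    unfolding no_block by (rule indep_varsD[OF indep_Y]) (use False in auto)
  also have "\<dots> \<le> (\<Prod>j\<in>{1..J}. exp (- p))"
  proof (rule prod_mono)
    fix j
    assume j: "j \<in> {1..J}"
    have "prob (Y j -` {c<..} \<inter> space M) = 1 - prob {x \<in> space M. Y j x \<le> c}"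
      by (subst prob_compl[symmetric]) (auto intro!: arg_cong[where f = prob])
    also have "\<dots> \<le> exp (- p)"
      using assms[OF j] exp_ge_add_one_self[of "- p"] by (simp add: Y_def)
    finally show "0 \<le> prob (Y j -` {c<..} \<inter> space M) \<and> prob (Y j -` {c<..} \<inter> space M) \<le> exp (- p)"
      by simp
  qed
  also have "\<dots> = exp (- real J * p)"
    by (simp add: exp_of_nat_mult[symmetric])
  finally show ?thesis .
qed (simp add: some_block_sum_le_def prob_space)

lemma eventually_prob_no_block_sum_le:
  assumes "a0 \<le> 0" "\<And>b. shifted_mgf q a0 \<le> shifted_mgf q b"
    and "\<And>h. h > 0 \<Longrightarrow> shifted_mgf q a0 < shifted_mgf q (a0 - h)"
    and "shifted_mgf q a0 = exp (- s)" "\<delta> > 0"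
  shows "eventually (\<lambda>k. \<forall>J. prob {x \<in> space M. \<not> some_block_sum_le (\<lambda>i. X i x) k J (q * k)}
                           \<le> exp (- real J * (exp (- (real k * (s + \<delta>))) / 2))) sequentially"
proof -
  have pow: "(shifted_mgf q a0 * exp (- \<delta>)) ^ m = exp (- (real m * (s + \<delta>)))" for m
    unfolding assms(4) by (simp add: exp_of_nat_mult[symmetric] exp_add[symmetric] algebra_simps)
  have "eventually (\<lambda>m. \<forall>I. finite I \<longrightarrow> I \<subseteq> {1..} \<longrightarrow> card I = m \<longrightarrow>
          (shifted_mgf q a0 * exp (- \<delta>)) ^ m / 2 \<le> prob {x \<in> space M. (\<Sum>i\<in>I. X i x) \<le> q * m})
          sequentially"
    by (rule eventually_prob_sum_le_ge) (fact assms)+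
  then show ?thesis
    unfolding pow
  proof eventually_elim
    case (elim k)
    show ?case
    proof (intro allI prob_no_block_sum_le)
      fix J j :: nat
      assume "j \<in> {1..J}"
      then show "exp (- (real k * (s + \<delta>))) / 2 \<le> prob {x \<in> space M. (\<Sum>i\<in>block k j. X i x) \<le> q * k}"
        using elim[rule_format, of "block k j"] block_subset card_block by auto
    qed
  qed
qed

lemma eventually_level_failure_le:
  assumes "a0 \<le> 0" "\<And>b. shifted_mgf q a0 \<le> shifted_mgf q b"
    and "\<And>h. h > 0 \<Longrightarrow> shifted_mgf q a0 < shifted_mgf q (a0 - h)"
    and "shifted_mgf q a0 = exp (- s)" "eps > 0"
  shows "eventually (\<lambda>k. exp ((real k + 2) * (s + eps))
           * prob {x \<in> space M. \<not> some_block_sum_le (\<lambda>i. X i x) k (level_blocks (s + eps) k) (q * k)}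
           \<le> exp (- real k)) sequentially"
proof -
  have "s \<ge> 0"
    using assms(2)[of 0] assms(4) by simp
  have "eventually (\<lambda>k. \<forall>J. prob {x \<in> space M. \<not> some_block_sum_le (\<lambda>i. X i x) k J (q * k)}
          \<le> exp (- real J * (exp (- (real k * (s + eps / 2))) / 2))) sequentially"
  proof (rule eventually_prob_no_block_sum_le[OF assms(1-4)])
    show "0 < eps / 2"
      using assms(5) by simp
  qed
  moreover have "eventually (\<lambda>k. exp ((real k + 2) * (s + eps))
      * exp (- real (level_blocks (s + eps) k) * (exp (- (real k * (s + eps / 2))) / 2)) \<le> exp (- real k))
      sequentially"
    using \<open>s \<ge> 0\<close> assms(5) by (intro eventually_exp_growth_times_block_failure_le) auto
  ultimately show ?thesis
  proof eventually_elim
    case (elim k)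
    then show ?case
      by (meson exp_ge_zero mult_left_mono order_trans)
  qed
qed

lemma summable_prob_no_block_sum_le:
  assumes "a0 \<le> 0" "\<And>b. shifted_mgf q a0 \<le> shifted_mgf q b"
    and "\<And>h. h > 0 \<Longrightarrow> shifted_mgf q a0 < shifted_mgf q (a0 - h)"
    and "shifted_mgf q a0 = exp (- s)" "eps > 0"
  shows "summable (\<lambda>j. exp (real (A + 2 * Suc j) * (s + eps))
           * prob {x \<in> space M. \<not> some_block_sum_le (\<lambda>i. X i x) (A + 2 * j)
                                    (level_blocks (s + eps) (A + 2 * j)) (q * real (A + 2 * j))})"
    (is "summable ?g")
proof (rule summable_comparison_test_ev)
  have "eventually (\<lambda>k. exp ((real k + 2) * (s + eps))
           * prob {x \<in> space M. \<not> some_block_sum_le (\<lambda>i. X i x) k (level_blocks (s + eps) k) (q * k)}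
           \<le> exp (- real k)) sequentially"
    by (rule eventually_level_failure_le) (fact assms)+
  then have "eventually (\<lambda>j. exp ((real (A + 2 * j) + 2) * (s + eps))
      * prob {x \<in> space M. \<not> some_block_sum_le (\<lambda>i. X i x) (A + 2 * j)
          (level_blocks (s + eps) (A + 2 * j)) (q * real (A + 2 * j))} \<le> exp (- real (A + 2 * j)))
      sequentially"
    by (rule eventually_compose_filterlim) (auto intro!: filterlim_subseq simp: strict_mono_def)
  then show "eventually (\<lambda>j. norm (?g j) \<le> exp (- 1) ^ j) sequentially"
  proof eventually_elim
    case (elim j)
    have "norm (?g j) \<le> exp (- real (A + 2 * j))"
      using elim by (simp add: algebra_simps)
    also have "\<dots> \<le> exp (- 1) ^ j"
      by (simp add: exp_of_nat_mult[symmetric])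
    finally show ?case .
  qed
  show "summable (\<lambda>j. exp (- 1 :: real) ^ j)"
    by (rule summable_geometric) simp
qed

theorem nn_integral_T_time_finite:
  assumes "q < expectation (X 1)" "prob {x \<in> space M. X 1 x < q} > 0"
    and "even A" "A > 0" "eps > 0"
  shows "(\<integral>\<^sup>+x. ennreal_of_enat (T_time (\<lambda>i. X i x) (cramer_rate M (X 1) q) A eps q) \<partial>M) < \<infinity>"
proof -
  obtain a0 where a0: "a0 \<le> 0" "\<And>b. shifted_mgf q a0 \<le> shifted_mgf q b"
      "\<And>h. h > 0 \<Longrightarrow> shifted_mgf q a0 < shifted_mgf q (a0 - h)"
    using exists_leftmost_minimum[OF assms(1,2)] by blast
  define s where "s = - ln (shifted_mgf q a0)"
  have mgf_a0: "shifted_mgf q a0 = exp (- s)"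
    using shifted_mgf_pos[of q a0] by (simp add: s_def)
  have rate: "cramer_rate M (X 1) q = ereal s"
    using cramer_rate_eq_minimum[OF a0(2)] by (simp add: s_def)
  have "s \<ge> 0"
    using a0(2)[of 0] mgf_a0 by simp
  define G where "G j x \<longleftrightarrow> some_block_sum_le (\<lambda>i. X i x) (A + 2 * j)
                              (level_blocks (s + eps) (A + 2 * j)) (q * real (A + 2 * j))" for j x
  show ?thesis
  proof (rule nn_integral_finite_by_first_success[where G = G and c = "\<lambda>j. exp (real (A + 2 * j) * (s + eps))"])
    show "{x \<in> space M. \<not> G j x} \<in> sets M" for j
      unfolding G_def by (rule sets_no_block_sum_le)
    show "1 \<le> exp (real (A + 2 * j) * (s + eps))" for j
      using \<open>s \<ge> 0\<close> assms(5) by simp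
    show "ennreal_of_enat (T_time (\<lambda>i. X i x) (cramer_rate M (X 1) q) A eps q)
            \<le> ennreal (exp (real (A + 2 * j) * (s + eps)))" if "G j x" for x j
      unfolding rate using that \<open>s \<ge> 0\<close> assms(3-5)
      by (intro T_time_le_of_some_block[where w = "\<lambda>i. X i x" and k = "A + 2 * j"]) (auto simp: G_def)
    show "summable (\<lambda>j. exp (real (A + 2 * Suc j) * (s + eps)) * prob {x \<in> space M. \<not> G j x})"
      unfolding G_def using a0 mgf_a0 assms(5) by (rule summable_prob_no_block_sum_le)
  qed
qed

end

theorem lemmaB3:
  fixes M :: "'a measure" and X :: "nat \<Rightarrow> 'a \<Rightarrow> real"
    and q eps :: real and A :: nat
  assumes "prob_space M"
    and "prob_space.indep_vars M (\<lambda>_. borel) X {1..}"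
    and "\<And>i. i \<ge> 1 \<Longrightarrow> distr M borel (X i) = distr M borel (X 1)"
    and "\<And>\<alpha>::real. integrable M (\<lambda>x. exp (\<alpha> * X 1 x))"
    and "(\<integral>x. X 1 x \<partial>M) = 0"
    and "(\<integral>x. (X 1 x)\<^sup>2 \<partial>M) = 1"
    and "q < 0"
    and "measure M {x \<in> space M. X 1 x < q} > 0"
    and "even A" and "A > 0"
    and "eps > 0"
  shows "(\<integral>\<^sup>+x. ennreal_of_enat (T_time (\<lambda>i. X i x) (cramer_rate M (X 1) q) A eps q) \<partial>M) < \<infinity>"
proof -
  interpret iid_exp_moments M X
    using assms(1-4) by (intro iid_exp_moments.intro iid_exp_moments_axioms.intro)
  show ?thesis
    using assms(5,7-11) by (intro nn_integral_T_time_finite) auto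
qed

end
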